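(* Let $q\ge0$, $f\in L^2((0,T);\dot H^1)$, $u_0\in H$, and $\mathscr{F}(X)=\int_0^T\langle f(s),X(s)\rangle\,\mathrm{d}s+(u_0,X(0))$. Then for all $X\in\mathcal{X}_{k,q+1}$, \[ |\mathscr{F}(X)|\le\Big[\sum_{i=0}^{N-1}\Big(\int_{I_i}\|f(s)\|_{\dot H^{-1}}^2\,\mathrm{d}s+k_i^2\int_{I_i}\|f(s)\|_{\dot H^1}^2\,\mathrm{d}s\Big)+\|u_0\|_H^2\Big]^{\frac12}|X|_{\mathcal{X}_{k,q+1}} . \]
   Context: Let $V\hookrightarrow H\hookrightarrow V^*$ be a Gelfand triple of real separable Hilbert spaces, with $V$ densely embedded in $H$. Write $(\cdot,\cdot)$ for the inner product of $H$ and $\langle\cdot,\cdot\rangle$ for the duality. Let $A:V\to V^*$ be the operator associated with a symmetric, bounded, coercive bilinear form on $V$. For $\gamma\in\mathbb{R}$, $\dot H^\gamma=D(A^{\gamma/2})$ with norm $\|A^{\gamma/2}\cdot\|_H$, so $\dot H^1=V$ and $\dot H^{-1}=V^*$. Let $0=t_0<\dots<t_N=T$, $I_i=[t_i,t_{i+1}]$ and $k_i=t_{i+1}-t_i$. Let $\mathcal{X}_{k,q+1}$ be the set of $X\in L^2((0,T);V)\cap H^1((0,T);V^* )$ whose restriction to each $I_i$ is a polynomial in $t$ of degree $\le q+1$ with coefficients in $\dot H^1$. It carries the norm \[ |X|_{\mathcal{X}_{k,q+1}}^2=\|X(0)\|_H^2+\sum_{i}\int_{I_i}\big(\|\dot X\|_{\dot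 H^{-1}}^2+\|\Pi_i^{(q)}X\|_{\dot H^1}^2\big)\,\mathrm{d}s , \] where $\Pi_i^{(q)}$ is the $L^2(I_i)$-orthogonal projection onto polynomials in $t$ of degree $\le q$. *)

theory Defs
  imports "HOL-Analysis.Analysis"
begin

text \<open>Gelfand triple V \<subseteq> H \<subseteq> V*, H a real separable Hilbert space (the type 'h),
  V a dense subspace of H carrying a symmetric bilinear form a which is an inner product
  making V a Hilbert space continuously embedded in H.  The norm of Hdot^1 is the energy
  norm sqrt(a v v) = norm of A^(1/2) v.\<close>

definition gelfand_setup :: "'h::{real_inner,banach,second_countable_topology} set \<Rightarrow> ('h \<Rightarrow> 'h \<Rightarrow> real) \<Rightarrow> bool" where
  "gelfand_setup V a \<longleftrightarrow>
     subspace V \<and> closure V = UNIV \<and>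
     (\<forall>x\<in>V. \<forall>y\<in>V. a x y = a y x) \<and>
     (\<forall>x\<in>V. \<forall>y\<in>V. \<forall>z\<in>V. a (x + y) z = a x z + a y z) \<and>
     (\<forall>x\<in>V. \<forall>z\<in>V. \<forall>c::real. a (c *\<^sub>R x) z = c * a x z) \<and>
     (\<exists>C>0. \<forall>v\<in>V. (norm v)\<^sup>2 \<le> C * a v v) \<and>
     (\<forall>u::nat \<Rightarrow> 'h. (\<forall>n. u n \<in> V) \<longrightarrow>
        (\<forall>e>0. \<exists>M. \<forall>m\<ge>M. \<forall>n\<ge>M. a (u m - u n) (u m - u n) < e) \<longrightarrow>
        (\<exists>w\<in>V. \<forall>e>0. \<exists>M. \<forall>n\<ge>M. a (u n - w) (u n - w) < e))"

definition h1norm :: "('h \<Rightarrow> 'h \<Rightarrow> real) \<Rightarrow> 'h \<Rightarrow> real" where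
  "h1norm a v = sqrt (a v v)"

definition hm1norm :: "'h::real_inner set \<Rightarrow> ('h \<Rightarrow> 'h \<Rightarrow> real) \<Rightarrow> 'h \<Rightarrow> real" where
  "hm1norm V a g = Sup (insert 0 ((\<lambda>v. \<bar>inner g v\<bar> / h1norm a v) ` (V - {0})))"

definition partition :: "(nat \<Rightarrow> real) \<Rightarrow> nat \<Rightarrow> real \<Rightarrow> bool" where
  "partition t N T \<longleftrightarrow> t 0 = 0 \<and> t N = T \<and> (\<forall>i<N. t i < t (Suc i))"

text \<open>The space X_{k,q+1}: on each I_i = [t_i, t_{i+1}], X is a polynomial in time of degree
  at most q+1 with coefficients in V (continuity at the nodes is forced since the
  closed intervals overlap there).\<close>
definition in_Xk :: "'h::real_vector set \<Rightarrow> (nat \<Rightarrow> real) \<Rightarrow> nat \<Rightarrow> nat \<Rightarrow> (real \<Rightarrow> 'h) \<Rightarrow> bool" where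
  "in_Xk V t N q X \<longleftrightarrow>
     (\<exists>c::nat \<Rightarrow> nat \<Rightarrow> 'h. (\<forall>i<N. \<forall>j. c i j \<in> V) \<and>
        (\<forall>i<N. \<forall>s\<in>{t i..t (Suc i)}. X s = (\<Sum>j\<le>q+1. s ^ j *\<^sub>R c i j)))"

definition poly_proj :: "nat \<Rightarrow> real \<Rightarrow> real \<Rightarrow> (real \<Rightarrow> 'h::{real_inner,banach,second_countable_topology}) \<Rightarrow> (real \<Rightarrow> 'h)" where
  "poly_proj q lo hi X = (THE P. (\<exists>d::nat \<Rightarrow> 'h. P = (\<lambda>s. \<Sum>j\<le>q. s ^ j *\<^sub>R d j)) \<and>
       (\<forall>m\<le>q. (LINT s:{lo..hi}|lborel. s ^ m *\<^sub>R (X s - P s)) = 0))"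

definition Xk_norm2 :: "'h::{real_inner,banach,second_countable_topology} set \<Rightarrow> ('h \<Rightarrow> 'h \<Rightarrow> real) \<Rightarrow> (nat \<Rightarrow> real) \<Rightarrow> nat \<Rightarrow> nat \<Rightarrow> (real \<Rightarrow> 'h) \<Rightarrow> real" where
  "Xk_norm2 V a t N q X = (norm (X 0))\<^sup>2 +
     (\<Sum>i<N. LINT s:{t i..t (Suc i)}|lborel.
        (hm1norm V a (vector_derivative X (at s)))\<^sup>2 + (h1norm a (poly_proj q (t i) (t (Suc i)) X s))\<^sup>2)"

end

theory Submission
  imports Defs
begin

text \<open>
  On each interval \<open>I\<^sub>i\<close> write \<open>X = \<Pi>X + p w\<close>, where \<open>w\<close> is the top coefficient
  of \<open>X\<close> and \<open>p\<close> is the monic polynomial of degree \<open>q + 1\<close> orthogonal in \<open>L\<^sup>2(I\<^sub>i)\<close> to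
  all polynomials of degree \<open>\<le> q\<close> (Gram--Schmidt). By duality the first part contributes
  \<open>\<parallel>f\<parallel>\<^sub>-\<^sub>1 \<parallel>\<Pi>X\<parallel>\<^sub>1\<close> and the second \<open>\<parallel>f\<parallel>\<^sub>1 |p| \<parallel>w\<parallel>\<^sub>-\<^sub>1\<close>. The factor \<open>k\<^sub>i\<close> comes from the inverse
  estimate \<open>\<parallel>w\<parallel>\<^sub>-\<^sub>1 \<parallel>p\<parallel>\<^sub>L\<^sub>2 \<le> k\<^sub>i \<parallel>X'\<parallel>\<^sub>L\<^sub>2\<close>: testing with \<open>v \<in> V\<close> reduces it to the scalar polynomial
  \<open>\<phi> = (X, v)\<close>, for which orthogonality gives \<open>(w, v)\<^sup>2 \<integral>p\<^sup>2 \<le> \<integral>(\<phi> - \<phi>(t\<^sub>i))\<^sup>2\<close>, and a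
  Poincare inequality bounds this by \<open>k\<^sub>i\<^sup>2 \<integral>\<phi>'\<^sup>2\<close>. Cauchy--Schwarz in time on each interval, and
  then over the intervals together with the term \<open>(u\<^sub>0, X(0))\<close>, gives the estimate.
\<close>

section \<open>Cauchy--Schwarz inequalities\<close>

lemma integrable_mult_of_square_integrable:
  fixes u v :: "'a \<Rightarrow> real"
  assumes "u \<in> borel_measurable M" "v \<in> borel_measurable M"
    and "integrable M (\<lambda>x. (u x)\<^sup>2)" "integrable M (\<lambda>x. (v x)\<^sup>2)"
  shows "integrable M (\<lambda>x. u x * v x)"
proof (rule Bochner_Integration.integrable_bound)
  show "integrable M (\<lambda>x. (u x)\<^sup>2 + (v x)\<^sup>2)" using assms by auto
  show "AE x in M. norm (u x * v x) \<le> norm ((u x)\<^sup>2 + (v x)\<^sup>2)"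
  proof (intro AE_I2)
    fix x
    have "2 * \<bar>u x\<bar> * \<bar>v x\<bar> \<le> (u x)\<^sup>2 + (v x)\<^sup>2"
      using sum_squares_bound[of "\<bar>u x\<bar>" "\<bar>v x\<bar>"] by simp
    then have "\<bar>u x\<bar> * \<bar>v x\<bar> \<le> (u x)\<^sup>2 + (v x)\<^sup>2"
      using mult_nonneg_nonneg[OF abs_ge_zero abs_ge_zero, of "u x" "v x"] by linarith
    then show "norm (u x * v x) \<le> norm ((u x)\<^sup>2 + (v x)\<^sup>2)" by (simp add: abs_mult)
  qed
qed (use assms in auto)

lemma integral_abs_mult_le_sqrt:
  fixes u v :: "'a \<Rightarrow> real"
  assumes [measurable]: "u \<in> borel_measurable M" "v \<in> borel_measurable M"
    and iu: "integrable M (\<lambda>x. (u x)\<^sup>2)" and iv: "integrable M (\<lambda>x. (v x)\<^sup>2)"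
  shows "(\<integral>x. \<bar>u x * v x\<bar> \<partial>M) \<le> sqrt (\<integral>x. (u x)\<^sup>2 \<partial>M) * sqrt (\<integral>x. (v x)\<^sup>2 \<partial>M)"
proof -
  have iuv: "integrable M (\<lambda>x. \<bar>u x * v x\<bar>)"
    using integrable_mult_of_square_integrable[OF assms] by auto
  have "ennreal ((\<integral>x. \<bar>u x * v x\<bar> \<partial>M)\<^sup>2) = (\<integral>\<^sup>+x. ennreal \<bar>u x * v x\<bar> \<partial>M)\<^sup>2"
    using iuv by (simp add: nn_integral_eq_integral ennreal_power)
  also have "\<dots> = (\<integral>\<^sup>+x. ennreal \<bar>u x\<bar> * ennreal \<bar>v x\<bar> \<partial>M)\<^sup>2"
    by (simp add: abs_mult ennreal_mult)
  also have "\<dots> \<le> (\<integral>\<^sup>+x. ennreal \<bar>u x\<bar> ^ 2 \<partial>M) * (\<integral>\<^sup>+x. ennreal \<bar>v x\<bar> ^ 2 \<partial>M)"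
    by (rule Cauchy_Schwarz_nn_integral) auto
  also have "\<dots> = ennreal ((\<integral>x. (u x)\<^sup>2 \<partial>M) * (\<integral>x. (v x)\<^sup>2 \<partial>M))"
    using iu iv by (simp add: ennreal_power nn_integral_eq_integral ennreal_mult)
  finally have "(\<integral>x. \<bar>u x * v x\<bar> \<partial>M)\<^sup>2 \<le> (\<integral>x. (u x)\<^sup>2 \<partial>M) * (\<integral>x. (v x)\<^sup>2 \<partial>M)"
    by (simp add: ennreal_le_iff)
  then show ?thesis
    by (metis real_le_rsqrt real_sqrt_mult)
qed

lemma set_integrable_mult_of_square_integrable:
  fixes u v :: "'a \<Rightarrow> real"
  assumes "set_borel_measurable M A u" "set_borel_measurable M A v"
    and "set_integrable M A (\<lambda>x. (u x)\<^sup>2)" "set_integrable M A (\<lambda>x. (v x)\<^sup>2)"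
  shows "set_integrable M A (\<lambda>x. u x * v x)"
proof -
  have "(\<lambda>x. indicator A x *\<^sub>R (w x)\<^sup>2) = (\<lambda>x. (indicator A x *\<^sub>R w x)\<^sup>2)"
    and "(\<lambda>x. indicator A x *\<^sub>R (w x * w' x)) = (\<lambda>x. (indicator A x *\<^sub>R w x) * (indicator A x *\<^sub>R w' x))"
    for w w' :: "'a \<Rightarrow> real"
    by (auto split: split_indicator)
  then show ?thesis
    using integrable_mult_of_square_integrable[of "\<lambda>x. indicator A x *\<^sub>R u x" M "\<lambda>x. indicator A x *\<^sub>R v x"]
      assms
    unfolding set_integrable_def set_borel_measurable_def by simp
qed

lemma set_integral_abs_mult_le_sqrt:
  fixes u v :: "'a \<Rightarrow> real"
  assumes "set_borel_measurable M A u" "set_borel_measurable M A v"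
    and "set_integrable M A (\<lambda>x. (u x)\<^sup>2)" "set_integrable M A (\<lambda>x. (v x)\<^sup>2)"
  shows "(LINT x:A|M. \<bar>u x * v x\<bar>) \<le> sqrt (LINT x:A|M. (u x)\<^sup>2) * sqrt (LINT x:A|M. (v x)\<^sup>2)"
proof -
  have "(\<lambda>x. indicator A x *\<^sub>R (w x)\<^sup>2) = (\<lambda>x. (indicator A x *\<^sub>R w x)\<^sup>2)"
    and "(\<lambda>x. indicator A x *\<^sub>R \<bar>w x * w' x\<bar>) = (\<lambda>x. \<bar>(indicator A x *\<^sub>R w x) * (indicator A x *\<^sub>R w' x)\<bar>)"
    for w w' :: "'a \<Rightarrow> real"
    by (auto split: split_indicator)
  then show ?thesis
    using integral_abs_mult_le_sqrt[of "\<lambda>x. indicator A x *\<^sub>R u x" M "\<lambda>x. indicator A x *\<^sub>R v x"]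
      assms
    unfolding set_integrable_def set_borel_measurable_def set_lebesgue_integral_def by simp
qed

lemma abs_set_integral_le_sqrt_mult:
  fixes T U W :: "'a \<Rightarrow> real"
  assumes "set_borel_measurable M A T" "set_borel_measurable M A U" "set_borel_measurable M A W"
    and "set_integrable M A (\<lambda>x. (U x)\<^sup>2)" "set_integrable M A (\<lambda>x. (W x)\<^sup>2)"
    and bound: "AE x in M. x \<in> A \<longrightarrow> \<bar>T x\<bar> \<le> U x * W x"
  shows "set_integrable M A T"
    and "\<bar>LINT x:A|M. T x\<bar> \<le> sqrt (LINT x:A|M. (U x)\<^sup>2) * sqrt (LINT x:A|M. (W x)\<^sup>2)"
proof -
  have UW: "set_integrable M A (\<lambda>x. U x * W x)"
    using set_integrable_mult_of_square_integrable assms(2-5) .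
  show T: "set_integrable M A T"
    using bound by (intro set_integrable_bound[OF UW assms(1)]) auto
  have "\<bar>LINT x:A|M. T x\<bar> \<le> (LINT x:A|M. \<bar>T x\<bar>)"
    using T unfolding set_integrable_def set_lebesgue_integral_def
    by (auto intro: order_trans[OF integral_abs_bound] simp: abs_mult)
  also have "\<dots> \<le> (LINT x:A|M. \<bar>U x * W x\<bar>)"
    using bound
    by (intro set_integral_mono_AE set_integrable_abs T UW) (auto elim!: AE_mp)
  also have "\<dots> \<le> sqrt (LINT x:A|M. (U x)\<^sup>2) * sqrt (LINT x:A|M. (W x)\<^sup>2)"
    using set_integral_abs_mult_le_sqrt assms(2-5) .
  finally show "\<bar>LINT x:A|M. T x\<bar> \<le> sqrt (LINT x:A|M. (U x)\<^sup>2) * sqrt (LINT x:A|M. (W x)\<^sup>2)" .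
qed

section \<open>Set integrals over intervals\<close>

lemma set_integrable_continuous_on_interval:
  fixes g :: "real \<Rightarrow> 'b::{banach,second_countable_topology}"
  assumes "continuous_on {a..b} g"
  shows "set_integrable lborel {a..b} g" and "set_borel_measurable lborel {a..b} g"
  using borel_integrable_atLeastAtMost'[OF assms] set_measurable_continuous_on[OF _ assms]
  by (auto simp: set_borel_measurable_def)

lemma set_borel_integral_eq_integral_continuous:
  fixes g :: "real \<Rightarrow> real"
  assumes "continuous_on {a..b} g"
  shows "(LINT s:{a..b}|lborel. g s) = integral {a..b} g"
  by (rule set_borel_integral_eq_integral(2)[OF set_integrable_continuous_on_interval(1)[OF assms]])

lemma integral_mult_square_le:
  fixes u v :: "real \<Rightarrow> real"
  assumes cu: "continuous_on {a..b} u" and cv: "continuous_on {a..b} v"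
  shows "(integral {a..b} (\<lambda>s. u s * v s))\<^sup>2
    \<le> integral {a..b} (\<lambda>s. (u s)\<^sup>2) * integral {a..b} (\<lambda>s. (v s)\<^sup>2)"
proof -
  have cont: "continuous_on {a..b} (\<lambda>s. u s * v s)" "continuous_on {a..b} (\<lambda>s. \<bar>u s * v s\<bar>)"
    "continuous_on {a..b} (\<lambda>s. (u s)\<^sup>2)" "continuous_on {a..b} (\<lambda>s. (v s)\<^sup>2)"
    using cu cv by (auto intro!: continuous_intros)
  have "\<bar>integral {a..b} (\<lambda>s. u s * v s)\<bar> \<le> integral {a..b} (\<lambda>s. \<bar>u s * v s\<bar>)"
    using integral_norm_bound_integral[of "\<lambda>s. u s * v s" "{a..b}" "\<lambda>s. \<bar>u s * v s\<bar>"]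
    by (simp add: integrable_continuous_interval cont)
  also have "\<dots> \<le> sqrt (integral {a..b} (\<lambda>s. (u s)\<^sup>2)) * sqrt (integral {a..b} (\<lambda>s. (v s)\<^sup>2))"
    using set_integral_abs_mult_le_sqrt[of lborel "{a..b}" u v]
    by (simp add: set_integrable_continuous_on_interval set_borel_integral_eq_integral_continuous cu cv cont)
  finally have "\<bar>integral {a..b} (\<lambda>s. u s * v s)\<bar>\<^sup>2
      \<le> (sqrt (integral {a..b} (\<lambda>s. (u s)\<^sup>2)) * sqrt (integral {a..b} (\<lambda>s. (v s)\<^sup>2)))\<^sup>2"
    by (rule power_mono) simp
  moreover have "integral {a..b} (\<lambda>s. (u s)\<^sup>2) \<ge> 0" "integral {a..b} (\<lambda>s. (v s)\<^sup>2) \<ge> 0"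
    by (auto intro!: integral_nonneg integrable_continuous_interval cont)
  ultimately show ?thesis by (simp add: power_mult_distrib)
qed

lemma set_integral_inner_left:
  fixes f :: "'a \<Rightarrow> 'b::{real_inner,banach,second_countable_topology}"
  assumes "set_integrable M A f"
  shows "inner (LINT x:A|M. f x) c = (LINT x:A|M. inner (f x) c)"
  using assms unfolding set_integrable_def set_lebesgue_integral_def
  by (simp add: integral_inner_left[symmetric])

lemma set_integral_scaleR_left_set_integrable:
  fixes g :: "'a \<Rightarrow> real"
  assumes "set_integrable M A g"
  shows "(LINT x:A|M. g x *\<^sub>R c) = (LINT x:A|M. g x) *\<^sub>R c"
proof -
  have "(\<lambda>x. indicator A x *\<^sub>R (g x *\<^sub>R c)) = (\<lambda>x. (indicator A x *\<^sub>R g x) *\<^sub>R c)"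
    by simp
  then show ?thesis
    using assms unfolding set_integrable_def set_lebesgue_integral_def
    by (simp only: integral_scaleR_left)
qed

lemma set_integral_cong_interior:
  fixes g h :: "real \<Rightarrow> 'b::{banach,second_countable_topology}"
  assumes "\<And>s. s \<in> {a<..<b} \<Longrightarrow> g s = h s"
  shows "set_integrable lborel {a..b} g \<longleftrightarrow> set_integrable lborel {a..b} h"
    and "(LINT s:{a..b}|lborel. g s) = (LINT s:{a..b}|lborel. h s)"
proof -
  have eq: "indicator {a..b} s *\<^sub>R g s = indicator {a..b} s *\<^sub>R h s"
    if "s \<in> space lborel" "s \<notin> {a, b}" for s
  proof (cases "s \<in> {a..b}")
    case True
    with that have "s \<in> {a<..<b}" by auto
    then show ?thesis by (simp add: assms)
  qed simp
  show "set_integrable lborel {a..b} g \<longleftrightarrow> set_integrable lborel {a..b} h"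
    unfolding set_integrable_def
    by (rule integrable_discrete_difference[where X="{a, b}", OF _ _ _ eq]) auto
  show "(LINT s:{a..b}|lborel. g s) = (LINT s:{a..b}|lborel. h s)"
    unfolding set_lebesgue_integral_def by (rule integral_discrete_difference[where X="{a, b}", OF _ _ _ eq]) auto
qed

lemma set_integral_sum_partition:
  fixes g :: "real \<Rightarrow> 'b::{banach,second_countable_topology}" and t :: "nat \<Rightarrow> real"
  assumes "\<And>i. i < N \<Longrightarrow> t i \<le> t (Suc i)"
    and "\<And>i. i < N \<Longrightarrow> set_integrable lborel {t i..t (Suc i)} g"
  shows "t 0 \<le> t N \<and> set_integrable lborel {t 0..t N} g \<and>
    (LINT s:{t 0..t N}|lborel. g s) = (\<Sum>i<N. LINT s:{t i..t (Suc i)}|lborel. g s)"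
  using assms
proof (induction N)
  case 0
  have point: "(\<lambda>s. indicator {t 0..t 0} s *\<^sub>R g s) = (\<lambda>s. if s = t 0 then g (t 0) else 0)"
    by (auto split: split_indicator)
  have "AE s in lborel. (if s = t 0 then g (t 0) else 0) = 0"
    using AE_lborel_singleton[of "t 0"] by eventually_elim simp
  then show ?case
    unfolding set_integrable_def set_lebesgue_integral_def point
    by (simp add: integral_eq_zero_AE integrable_cong_AE[of _ _ "\<lambda>_. 0"])
next
  case (Suc N)
  then have IH: "t 0 \<le> t N" "set_integrable lborel {t 0..t N} g"
    "(LINT s:{t 0..t N}|lborel. g s) = (\<Sum>i<N. LINT s:{t i..t (Suc i)}|lborel. g s)"
    by auto
  have last: "t N \<le> t (Suc N)" "set_integrable lborel {t N..t (Suc N)} g"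
    using Suc.prems by auto
  have split: "{t 0..t (Suc N)} = {t 0..t N} \<union> {t N..t (Suc N)}"
    using IH(1) last(1) by auto
  have "AE s in lborel. \<not> (s \<in> {t 0..t N} \<and> s \<in> {t N..t (Suc N)})"
    using AE_lborel_singleton[of "t N"] by eventually_elim auto
  then have "(LINT s:{t 0..t (Suc N)}|lborel. g s)
      = (LINT s:{t 0..t N}|lborel. g s) + (LINT s:{t N..t (Suc N)}|lborel. g s)"
    unfolding split by (rule set_integral_Un_AE) (use IH last in auto)
  moreover have "set_integrable lborel {t 0..t (Suc N)} g"
    unfolding split by (rule set_integrable_Un) (use IH last in auto)
  ultimately show ?case using IH last by simp
qed

section \<open>Polynomials on an interval\<close>

lemma continuous_on_eq_0_if_integral_square_eq_0:
  fixes g :: "real \<Rightarrow> real"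
  assumes "a < b" "continuous_on {a..b} g" "integral {a..b} (\<lambda>s. (g s)\<^sup>2) = 0" "s \<in> {a..b}"
  shows "g s = 0"
proof -
  have c2: "continuous_on {a..b} (\<lambda>s. (g s)\<^sup>2)"
    using assms(2) by (intro continuous_intros)
  have "((\<lambda>s. (g s)\<^sup>2) has_integral 0) {a..b}"
    using assms(3) integrable_continuous_interval[OF c2] by (metis has_integral_integrable_integral)
  then have "(g s)\<^sup>2 = 0"
    using has_integral_0_cbox_imp_0[of a b "\<lambda>s. (g s)\<^sup>2" s] c2 assms(1,4) by simp
  then show ?thesis by simp
qed

lemma poly_coeffs_eq_0_if_moments_eq_0:
  fixes \<delta> :: "nat \<Rightarrow> real"
  assumes ab: "a < b"
    and moments: "\<And>m. m \<le> q \<Longrightarrow> integral {a..b} (\<lambda>s. s ^ m * (\<Sum>j\<le>q. \<delta> j * s ^ j)) = 0"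
  shows "\<forall>j\<le>q. \<delta> j = 0"
proof -
  define D where "D s = (\<Sum>j\<le>q. \<delta> j * s ^ j)" for s :: real
  have cD: "continuous_on {a..b} D" unfolding D_def by (intro continuous_intros)
  have "integral {a..b} (\<lambda>s. (D s)\<^sup>2) = integral {a..b} (\<lambda>s. \<Sum>m\<le>q. \<delta> m * (s ^ m * D s))"
    by (simp add: power2_eq_square D_def[of s for s] sum_distrib_right sum_distrib_left mult_ac)
  also have "\<dots> = (\<Sum>m\<le>q. \<delta> m * integral {a..b} (\<lambda>s. s ^ m * D s))"
    by (simp add: integral_sum integrable_continuous_interval continuous_intros cD
        flip: integral_mult_right)
  also have "\<dots> = 0" using moments unfolding D_def by simp
  finally have "integral {a..b} (\<lambda>s. (D s)\<^sup>2) = 0" .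
  then have "{a..b} \<subseteq> {s. (\<Sum>j\<le>q. \<delta> j * s ^ j) = 0}"
    using continuous_on_eq_0_if_integral_square_eq_0[OF ab cD] unfolding D_def by auto
  then have "infinite {s. (\<Sum>j\<le>q. \<delta> j * s ^ j) = 0}"
    using infinite_Icc[OF ab] finite_subset by blast
  then show ?thesis using polyfun_finite_roots[of \<delta> q] by auto
qed

text \<open>The induction step is one Gram--Schmidt step: from the remainder \<open>H\<close> of \<open>h\<close> subtract its
  \<open>L\<^sup>2\<close>-projection onto the remainder \<open>G\<close> of \<open>s\<^sup>n\<close>.\<close>

lemma orthogonal_remainder_exists:
  fixes h :: "real \<Rightarrow> real"
  assumes ab: "a < b" and "continuous_on {a..b} h"
  shows "\<exists>\<beta>. \<forall>l<n. integral {a..b} (\<lambda>s. (h s - (\<Sum>j<n. \<beta> j * s ^ j)) * s ^ l) = 0"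
  using assms(2)
proof (induction n arbitrary: h)
  case 0
  then show ?case by simp
next
  case (Suc n)
  obtain \<beta> where \<beta>: "\<forall>l<n. integral {a..b} (\<lambda>s. (h s - (\<Sum>j<n. \<beta> j * s ^ j)) * s ^ l) = 0"
    using Suc by blast
  have "continuous_on {a..b} (\<lambda>s::real. s ^ n)" by (intro continuous_intros)
  then obtain \<gamma> where \<gamma>: "\<forall>l<n. integral {a..b} (\<lambda>s. (s ^ n - (\<Sum>j<n. \<gamma> j * s ^ j)) * s ^ l) = 0"
    using Suc.IH by blast
  define H where "H s = h s - (\<Sum>j<n. \<beta> j * s ^ j)" for s
  define G where "G s = s ^ n - (\<Sum>j<n. \<gamma> j * s ^ j)" for s :: real
  define c where "c = integral {a..b} (\<lambda>s. H s * G s) / integral {a..b} (\<lambda>s. (G s)\<^sup>2)"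
  have cH: "continuous_on {a..b} H" unfolding H_def using Suc.prems by (intro continuous_intros)
  have cG: "continuous_on {a..b} G" unfolding G_def by (intro continuous_intros)
  have linear: "integral {a..b} (\<lambda>s. (H s - c * G s) * g s)
      = integral {a..b} (\<lambda>s. H s * g s) - c * integral {a..b} (\<lambda>s. G s * g s)"
    if "continuous_on {a..b} g" for g
    using that by (simp add: algebra_simps integral_diff integrable_continuous_interval
        continuous_intros cH cG flip: integral_mult_right)
  have low: "integral {a..b} (\<lambda>s. (H s - c * G s) * s ^ l) = 0" if "l < n" for l
    using linear[of "\<lambda>s. s ^ l"] \<beta> \<gamma> that unfolding H_def G_def by (simp add: continuous_intros)
  have "integral {a..b} (\<lambda>s. (H s - c * G s) * G s) = 0"
  proof (cases "integral {a..b} (\<lambda>s. (G s)\<^sup>2) = 0")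
    case True
    then have "integral {a..b} (\<lambda>s. (H s - c * G s) * G s) = integral {a..b} (\<lambda>s. 0)"
      using continuous_on_eq_0_if_integral_square_eq_0[OF ab cG] by (intro integral_cong) simp
    then show ?thesis by simp
  next
    case False
    then show ?thesis
      using linear[OF cG] by (simp add: c_def power2_eq_square)
  qed
  moreover have "s ^ n = G s + (\<Sum>j<n. \<gamma> j * s ^ j)" for s :: real
    by (simp add: G_def)
  then have "integral {a..b} (\<lambda>s. (H s - c * G s) * s ^ n)
      = integral {a..b} (\<lambda>s. (H s - c * G s) * G s)
        + (\<Sum>j<n. \<gamma> j * integral {a..b} (\<lambda>s. (H s - c * G s) * s ^ j))"
    by (simp add: distrib_left sum_distrib_left mult_ac integral_add integral_sum
        integrable_continuous_interval continuous_intros cH cG flip: integral_mult_right)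
  ultimately have top: "integral {a..b} (\<lambda>s. (H s - c * G s) * s ^ n) = 0"
    using low by simp
  define \<beta>' where "\<beta>' j = (if j < n then \<beta> j - c * \<gamma> j else c)" for j
  have "h s - (\<Sum>j<Suc n. \<beta>' j * s ^ j) = H s - c * G s" for s
    by (simp add: \<beta>'_def H_def G_def algebra_simps sum_subtractf sum_distrib_left)
  then show ?case
    using low top by (intro exI[of _ \<beta>']) (auto simp: less_Suc_eq)
qed

lemma poincare_inequality:
  fixes \<phi> \<phi>' :: "real \<Rightarrow> real"
  assumes ab: "a \<le> b"
    and deriv: "\<And>x. x \<in> {a..b} \<Longrightarrow> (\<phi> has_real_derivative \<phi>' x) (at x within {a..b})"
    and c\<phi>': "continuous_on {a..b} \<phi>'"
  shows "integral {a..b} (\<lambda>s. (\<phi> s - \<phi> a)\<^sup>2) \<le> (b - a)\<^sup>2 * integral {a..b} (\<lambda>s. (\<phi>' s)\<^sup>2)"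
proof -
  define K where "K = integral {a..b} (\<lambda>s. (\<phi>' s)\<^sup>2)"
  have c\<phi>: "continuous_on {a..b} \<phi>" by (rule DERIV_continuous_on[OF deriv])
  have pointwise: "(\<phi> s - \<phi> a)\<^sup>2 \<le> (b - a) * K" if s: "s \<in> {a..b}" for s
  proof -
    have "(\<phi> has_vector_derivative \<phi>' x) (at x within {a..s})" if "x \<in> {a..s}" for x
      using deriv[of x] that s
      by (auto simp: has_real_derivative_iff_has_vector_derivative
          intro: has_vector_derivative_within_subset[where S="{a..b}"])
    then have "(\<phi>' has_integral (\<phi> s - \<phi> a)) {a..s}"
      using s by (intro fundamental_theorem_of_calculus) auto
    then have "(\<phi> s - \<phi> a)\<^sup>2 = (integral {a..s} (\<lambda>x. 1 * \<phi>' x))\<^sup>2"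
      by (simp add: integral_unique)
    also have "\<dots> \<le> integral {a..s} (\<lambda>x. 1\<^sup>2) * integral {a..s} (\<lambda>x. (\<phi>' x)\<^sup>2)"
      using s by (intro integral_mult_square_le continuous_on_subset[OF c\<phi>']) auto
    also have "\<dots> \<le> (b - a) * K"
    proof (rule mult_mono)
      have "continuous_on {a..s} (\<lambda>x. (\<phi>' x)\<^sup>2)"
        using s by (intro continuous_intros continuous_on_subset[OF c\<phi>']) auto
      then show "0 \<le> integral {a..s} (\<lambda>x. (\<phi>' x)\<^sup>2)"
        by (intro integral_nonneg integrable_continuous_interval) auto
      show "integral {a..s} (\<lambda>x. (\<phi>' x)\<^sup>2) \<le> K"
        unfolding K_def using s
        by (intro integral_subset_le integrable_continuous_interval continuous_intros c\<phi>'
            continuous_on_subset[OF c\<phi>']) auto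
    qed (use s in auto)
    finally show ?thesis .
  qed
  have "integral {a..b} (\<lambda>s. (\<phi> s - \<phi> a)\<^sup>2) \<le> integral {a..b} (\<lambda>s. (b - a) * K)"
    using pointwise
    by (intro integral_le integrable_continuous_interval continuous_intros c\<phi>) auto
  also have "\<dots> = (b - a)\<^sup>2 * K" using ab by (simp add: power2_eq_square)
  finally show ?thesis unfolding K_def .
qed

lemma coeff_bound_by_orthogonality:
  fixes p \<psi> :: "real \<Rightarrow> real" and \<gamma> :: "nat \<Rightarrow> real"
  assumes cp: "continuous_on {a..b} p" and c\<psi>: "continuous_on {a..b} \<psi>"
    and orth: "\<And>l. l < n \<Longrightarrow> integral {a..b} (\<lambda>s. p s * s ^ l) = 0"
    and decomp: "\<And>s. s \<in> {a..b} \<Longrightarrow> \<psi> s = E * p s + (\<Sum>j<n. \<gamma> j * s ^ j)"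
  shows "E\<^sup>2 * integral {a..b} (\<lambda>s. (p s)\<^sup>2) \<le> integral {a..b} (\<lambda>s. (\<psi> s)\<^sup>2)"
proof -
  define P where "P = integral {a..b} (\<lambda>s. (p s)\<^sup>2)"
  define Q where "Q = integral {a..b} (\<lambda>s. (\<psi> s)\<^sup>2)"
  have "integral {a..b} (\<lambda>s. p s * \<psi> s)
      = integral {a..b} (\<lambda>s. E * (p s)\<^sup>2 + (\<Sum>j<n. \<gamma> j * (p s * s ^ j)))"
    using decomp by (intro integral_cong) (simp add: power2_eq_square algebra_simps sum_distrib_left)
  also have "\<dots> = E * P"
    using orth
    by (simp add: P_def integral_add integral_sum integrable_continuous_interval
        continuous_intros cp)
  finally have "(E * P)\<^sup>2 \<le> P * Q"
    unfolding P_def Q_def using integral_mult_square_le[OF cp c\<psi>] by simp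
  moreover have "P \<ge> 0" "Q \<ge> 0"
    unfolding P_def Q_def
    by (auto intro!: integral_nonneg integrable_continuous_interval continuous_intros cp c\<psi>)
  ultimately show ?thesis
    unfolding P_def[symmetric] Q_def[symmetric]
    by (cases "P = 0") (auto simp: power2_eq_square mult_le_cancel_left mult_ac)
qed

lemma poly_top_coeff_bound:
  fixes e \<beta> :: "nat \<Rightarrow> real"
  assumes ab: "lo < hi"
    and orth: "\<And>l. l < Suc q \<Longrightarrow>
      integral {lo..hi} (\<lambda>s. (s ^ Suc q - (\<Sum>j<Suc q. \<beta> j * s ^ j)) * s ^ l) = 0"
  shows "(e (Suc q))\<^sup>2 * integral {lo..hi} (\<lambda>s. (s ^ Suc q - (\<Sum>j<Suc q. \<beta> j * s ^ j))\<^sup>2)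
    \<le> (hi - lo)\<^sup>2 * integral {lo..hi} (\<lambda>s. (\<Sum>j\<le>Suc q. e j * (real j * s ^ (j - 1)))\<^sup>2)"
proof -
  define p where "p s = s ^ Suc q - (\<Sum>j<Suc q. \<beta> j * s ^ j)" for s :: real
  define \<phi> where "\<phi> s = (\<Sum>j\<le>Suc q. e j * s ^ j)" for s :: real
  define \<gamma> where "\<gamma> j = e j + e (Suc q) * \<beta> j - (if j = 0 then \<phi> lo else 0)" for j
  have decomp: "\<phi> s - \<phi> lo = e (Suc q) * p s + (\<Sum>j<Suc q. \<gamma> j * s ^ j)" for s
  proof -
    have "\<phi> s = (\<Sum>j<Suc q. (e j + e (Suc q) * \<beta> j) * s ^ j) + e (Suc q) * p s"
      unfolding \<phi>_def p_def
      by (simp add: lessThan_Suc_atMost algebra_simps sum.distrib sum_distrib_left sum_subtractf)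
    moreover have "(\<Sum>j<Suc q. (if j = 0 then \<phi> lo else 0) * s ^ j) = \<phi> lo"
      by (simp add: sum.lessThan_Suc_shift del: sum.lessThan_Suc)
    ultimately show ?thesis
      unfolding \<gamma>_def by (simp add: algebra_simps sum_subtractf)
  qed
  have deriv: "(\<phi> has_real_derivative (\<Sum>j\<le>Suc q. e j * (real j * s ^ (j - 1)))) (at s within {lo..hi})"
    for s
    unfolding \<phi>_def by (auto intro!: derivative_eq_intros simp: mult_ac simp del: sum.atMost_Suc)
  have "(e (Suc q))\<^sup>2 * integral {lo..hi} (\<lambda>s. (p s)\<^sup>2) \<le> integral {lo..hi} (\<lambda>s. (\<phi> s - \<phi> lo)\<^sup>2)"
  proof (rule coeff_bound_by_orthogonality[where \<gamma>=\<gamma>])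
    show "continuous_on {lo..hi} p" "continuous_on {lo..hi} (\<lambda>s. \<phi> s - \<phi> lo)"
      unfolding p_def \<phi>_def by (intro continuous_intros)+
    show "integral {lo..hi} (\<lambda>s. p s * s ^ l) = 0" if "l < Suc q" for l
      using orth[OF that] by (simp add: p_def)
  qed (rule decomp)
  also have "\<dots> \<le> (hi - lo)\<^sup>2 * integral {lo..hi} (\<lambda>s. (\<Sum>j\<le>Suc q. e j * (real j * s ^ (j - 1)))\<^sup>2)"
    using ab deriv by (intro poincare_inequality continuous_intros) auto
  finally show ?thesis unfolding p_def .
qed

lemma vector_poly_coeffs_eq_0_if_moments_eq_0:
  fixes D :: "nat \<Rightarrow> 'h::{real_inner,banach,second_countable_topology}"
  assumes ab: "a < b"
    and moments: "\<And>m. m \<le> q \<Longrightarrow> (LINT s:{a..b}|lborel. s ^ m *\<^sub>R (\<Sum>j\<le>q. s ^ j *\<^sub>R D j)) = 0"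
  shows "\<forall>j\<le>q. D j = 0"
proof (intro allI impI)
  fix k assume k: "k \<le> q"
  have "\<forall>j\<le>q. inner (D j) (D k) = 0"
  proof (rule poly_coeffs_eq_0_if_moments_eq_0[OF ab])
    fix m assume m: "m \<le> q"
    have "integral {a..b} (\<lambda>s. s ^ m * (\<Sum>j\<le>q. inner (D j) (D k) * s ^ j))
        = (LINT s:{a..b}|lborel. inner (s ^ m *\<^sub>R (\<Sum>j\<le>q. s ^ j *\<^sub>R D j)) (D k))"
      by (simp add: set_borel_integral_eq_integral_continuous continuous_intros inner_sum_left mult_ac)
    also have "\<dots> = inner (LINT s:{a..b}|lborel. s ^ m *\<^sub>R (\<Sum>j\<le>q. s ^ j *\<^sub>R D j)) (D k)"
      by (simp add: set_integral_inner_left set_integrable_continuous_on_interval continuous_intros)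
    finally show "integral {a..b} (\<lambda>s. s ^ m * (\<Sum>j\<le>q. inner (D j) (D k) * s ^ j)) = 0"
      using moments[OF m] by simp
  qed
  then have "inner (D k) (D k) = 0" using k by blast
  then show "D k = 0" by simp
qed

lemma poly_proj_cong:
  assumes "\<And>s. s \<in> {a..b} \<Longrightarrow> X s = Y s"
  shows "poly_proj q a b X = poly_proj q a b Y"
proof -
  have "(LINT s:{a..b}|lborel. s ^ m *\<^sub>R (X s - P s)) = (LINT s:{a..b}|lborel. s ^ m *\<^sub>R (Y s - P s))"
    for m and P :: "real \<Rightarrow> 'a"
    using assms by (intro set_lebesgue_integral_cong) auto
  then show ?thesis unfolding poly_proj_def by simp
qed

lemma poly_proj_eqI:
  fixes X :: "real \<Rightarrow> 'h::{real_inner,banach,second_countable_topology}"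
  assumes ab: "a < b" and cX: "continuous_on {a..b} X"
    and moments: "\<And>m. m \<le> q \<Longrightarrow> (LINT s:{a..b}|lborel. s ^ m *\<^sub>R (X s - (\<Sum>j\<le>q. s ^ j *\<^sub>R d j))) = 0"
  shows "poly_proj q a b X = (\<lambda>s. \<Sum>j\<le>q. s ^ j *\<^sub>R d j)"
  unfolding poly_proj_def
proof (rule the_equality)
  show "(\<exists>d'. (\<lambda>s. \<Sum>j\<le>q. s ^ j *\<^sub>R d j) = (\<lambda>s. \<Sum>j\<le>q. s ^ j *\<^sub>R d' j)) \<and>
      (\<forall>m\<le>q. (LINT s:{a..b}|lborel. s ^ m *\<^sub>R (X s - (\<Sum>j\<le>q. s ^ j *\<^sub>R d j))) = 0)"
    using moments by blast
next
  fix P assume "(\<exists>d'. P = (\<lambda>s. \<Sum>j\<le>q. s ^ j *\<^sub>R d' j)) \<and>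
      (\<forall>m\<le>q. (LINT s:{a..b}|lborel. s ^ m *\<^sub>R (X s - P s)) = 0)"
  then obtain d' where P: "P = (\<lambda>s. \<Sum>j\<le>q. s ^ j *\<^sub>R d' j)"
    and moments': "\<And>m. m \<le> q \<Longrightarrow> (LINT s:{a..b}|lborel. s ^ m *\<^sub>R (X s - P s)) = 0"
    by blast
  have "(LINT s:{a..b}|lborel. s ^ m *\<^sub>R (\<Sum>j\<le>q. s ^ j *\<^sub>R (d j - d' j))) = 0" if m: "m \<le> q" for m
  proof -
    have "s ^ m *\<^sub>R (\<Sum>j\<le>q. s ^ j *\<^sub>R (d j - d' j))
        = s ^ m *\<^sub>R (X s - P s) - s ^ m *\<^sub>R (X s - (\<Sum>j\<le>q. s ^ j *\<^sub>R d j))" for s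
      by (simp add: P scaleR_diff_right sum_subtractf algebra_simps)
    moreover have "set_integrable lborel {a..b} (\<lambda>s. s ^ m *\<^sub>R (X s - Q s))"
      if "Q = P \<or> Q = (\<lambda>s. \<Sum>j\<le>q. s ^ j *\<^sub>R d j)" for Q
      using that by (auto simp: P intro!: set_integrable_continuous_on_interval continuous_intros cX)
    ultimately show ?thesis
      using moments[OF m] moments'[OF m] by (simp add: set_integral_diff)
  qed
  then have "\<forall>j\<le>q. d j - d' j = 0"
    by (rule vector_poly_coeffs_eq_0_if_moments_eq_0[OF ab])
  then show "P = (\<lambda>s. \<Sum>j\<le>q. s ^ j *\<^sub>R d j)"
    unfolding P by (auto intro!: sum.cong)
qed

lemma poly_split_top_coeff:
  fixes c :: "nat \<Rightarrow> 'a::real_vector"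
  shows "(\<Sum>j\<le>Suc q. s ^ j *\<^sub>R c j)
    = (\<Sum>j\<le>q. s ^ j *\<^sub>R (c j + \<beta> j *\<^sub>R c (Suc q)))
      + (s ^ Suc q - (\<Sum>j<Suc q. \<beta> j * s ^ j)) *\<^sub>R c (Suc q)"
  by (simp add: scaleR_add_right sum.distrib scaleR_sum_left scaleR_diff_left lessThan_Suc_atMost
      mult.commute)

lemma poly_proj_top_degree:
  fixes c :: "nat \<Rightarrow> 'h::{real_inner,banach,second_countable_topology}"
  assumes ab: "a < b"
    and X: "\<And>s. s \<in> {a..b} \<Longrightarrow> X s = (\<Sum>j\<le>Suc q. s ^ j *\<^sub>R c j)"
    and orth: "\<And>l. l < Suc q \<Longrightarrow> integral {a..b} (\<lambda>s. (s ^ Suc q - (\<Sum>j<Suc q. \<beta> j * s ^ j)) * s ^ l) = 0"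
  shows "poly_proj q a b X = (\<lambda>s. \<Sum>j\<le>q. s ^ j *\<^sub>R (c j + \<beta> j *\<^sub>R c (Suc q)))"
proof -
  define p where "p s = s ^ Suc q - (\<Sum>j<Suc q. \<beta> j * s ^ j)" for s :: real
  have "poly_proj q a b X = poly_proj q a b (\<lambda>s. \<Sum>j\<le>Suc q. s ^ j *\<^sub>R c j)"
    using X by (rule poly_proj_cong)
  also have "\<dots> = (\<lambda>s. \<Sum>j\<le>q. s ^ j *\<^sub>R (c j + \<beta> j *\<^sub>R c (Suc q)))"
  proof (rule poly_proj_eqI[OF ab])
    fix m assume "m \<le> q"
    then have "integral {a..b} (\<lambda>s. s ^ m * p s) = 0"
      using orth[of m] by (simp add: p_def mult.commute)
    moreover have "(LINT s:{a..b}|lborel. (s ^ m * p s) *\<^sub>R c (Suc q)) = integral {a..b} (\<lambda>s. s ^ m * p s) *\<^sub>R c (Suc q)"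
      by (simp add: set_integral_scaleR_left_set_integrable set_integrable_continuous_on_interval
          set_borel_integral_eq_integral_continuous p_def continuous_intros)
    ultimately show "(LINT s:{a..b}|lborel. s ^ m *\<^sub>R ((\<Sum>j\<le>Suc q. s ^ j *\<^sub>R c j)
        - (\<Sum>j\<le>q. s ^ j *\<^sub>R (c j + \<beta> j *\<^sub>R c (Suc q))))) = 0"
      by (simp add: poly_split_top_coeff[of _ c q \<beta>] p_def del: sum.atMost_Suc)
  qed (intro continuous_intros)
  finally show ?thesis .
qed

lemma vector_derivative_poly_on_interval:
  fixes c :: "nat \<Rightarrow> 'a::real_normed_vector"
  assumes "\<And>s. s \<in> {a..b} \<Longrightarrow> X s = (\<Sum>j\<le>n. s ^ j *\<^sub>R c j)" and "s \<in> {a<..<b}"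
  shows "vector_derivative X (at s) = (\<Sum>j\<le>n. (real j * s ^ (j - 1)) *\<^sub>R c j)"
proof -
  have "((\<lambda>s. \<Sum>j\<le>n. s ^ j *\<^sub>R c j) has_vector_derivative (\<Sum>j\<le>n. (real j * s ^ (j - 1)) *\<^sub>R c j)) (at s)"
    by (auto intro!: derivative_eq_intros)
  then have "(X has_vector_derivative (\<Sum>j\<le>n. (real j * s ^ (j - 1)) *\<^sub>R c j)) (at s)"
    by (rule has_vector_derivative_transform_within_open[of _ _ _ "{a<..<b}"]) (use assms in auto)
  then show ?thesis by (rule vector_derivative_at)
qed

section \<open>The Gelfand triple\<close>

locale gelfand_triple =
  fixes V :: "'h::{real_inner,banach,second_countable_topology} set" and a :: "'h \<Rightarrow> 'h \<Rightarrow> real"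
  assumes gelfand_setup: "gelfand_setup V a"
begin

lemma subspace_V: "subspace V"
  using gelfand_setup unfolding gelfand_setup_def by blast

lemma form_symmetric: "x \<in> V \<Longrightarrow> y \<in> V \<Longrightarrow> a x y = a y x"
  using gelfand_setup unfolding gelfand_setup_def by blast

lemma form_add_left: "x \<in> V \<Longrightarrow> y \<in> V \<Longrightarrow> z \<in> V \<Longrightarrow> a (x + y) z = a x z + a y z"
  using gelfand_setup unfolding gelfand_setup_def by blast

lemma form_scaleR_left: "x \<in> V \<Longrightarrow> z \<in> V \<Longrightarrow> a (c *\<^sub>R x) z = c * a x z"
  using gelfand_setup unfolding gelfand_setup_def by blast

lemma form_coercive:
  obtains C where "C > 0" "\<And>v. v \<in> V \<Longrightarrow> (norm v)\<^sup>2 \<le> C * a v v"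
  using gelfand_setup unfolding gelfand_setup_def by blast

lemma form_zero_left: "z \<in> V \<Longrightarrow> a 0 z = 0"
  using form_scaleR_left[of 0 z 0] subspace_V by (simp add: subspace_0)

lemma form_sum_left:
  assumes "finite J" "\<And>j. j \<in> J \<Longrightarrow> x j \<in> V" "z \<in> V"
  shows "a (\<Sum>j\<in>J. c j *\<^sub>R x j) z = (\<Sum>j\<in>J. c j * a (x j) z)"
  using assms
proof (induction J rule: finite_induct)
  case empty
  then show ?case by (simp add: form_zero_left)
next
  case (insert j J)
  have "(\<Sum>j\<in>J. c j *\<^sub>R x j) \<in> V" "c j *\<^sub>R x j \<in> V"
    using insert.prems subspace_V by (auto intro!: subspace_sum subspace_scale)
  then show ?case
    using insert form_add_left form_scaleR_left by simp
qed

lemma form_sum_sum: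
  assumes "finite J" "\<And>j. j \<in> J \<Longrightarrow> x j \<in> V"
  shows "a (\<Sum>j\<in>J. c j *\<^sub>R x j) (\<Sum>l\<in>J. c l *\<^sub>R x l) = (\<Sum>j\<in>J. \<Sum>l\<in>J. c j * c l * a (x j) (x l))"
proof -
  have sum_V: "(\<Sum>l\<in>J. c l *\<^sub>R x l) \<in> V"
    using assms subspace_V by (auto intro!: subspace_sum subspace_scale)
  have "a (\<Sum>j\<in>J. c j *\<^sub>R x j) (\<Sum>l\<in>J. c l *\<^sub>R x l) = (\<Sum>j\<in>J. c j * a (\<Sum>l\<in>J. c l *\<^sub>R x l) (x j))"
    using form_sum_left[OF assms sum_V] assms(2) sum_V form_symmetric by (simp cong: sum.cong)
  also have "\<dots> = (\<Sum>j\<in>J. \<Sum>l\<in>J. c j * c l * a (x j) (x l))"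
    using assms form_sum_left[OF assms] form_symmetric
    by (simp add: sum_distrib_left mult.assoc cong: sum.cong)
  finally show ?thesis .
qed

lemma form_nonneg: "v \<in> V \<Longrightarrow> 0 \<le> a v v"
proof -
  assume v: "v \<in> V"
  obtain C where "C > 0" "\<And>v. v \<in> V \<Longrightarrow> (norm v)\<^sup>2 \<le> C * a v v"
    using form_coercive by blast
  then show ?thesis using v by (smt (verit) zero_le_power2 zero_le_mult_iff)
qed

lemma form_pos: "v \<in> V \<Longrightarrow> v \<noteq> 0 \<Longrightarrow> 0 < a v v"
proof -
  assume v: "v \<in> V" "v \<noteq> 0"
  obtain C where "C > 0" "\<And>v. v \<in> V \<Longrightarrow> (norm v)\<^sup>2 \<le> C * a v v"
    using form_coercive by blast
  moreover have "0 < (norm v)\<^sup>2" using v by simp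
  ultimately show ?thesis using v by (smt (verit) zero_less_mult_iff)
qed

lemma h1norm_pos: "v \<in> V \<Longrightarrow> v \<noteq> 0 \<Longrightarrow> 0 < h1norm a v"
  unfolding h1norm_def by (simp add: form_pos)

lemma h1norm_nonneg: "v \<in> V \<Longrightarrow> 0 \<le> h1norm a v"
  unfolding h1norm_def by (simp add: form_nonneg)

lemma h1norm_zero: "h1norm a 0 = 0"
  unfolding h1norm_def by (simp add: form_zero_left subspace_0[OF subspace_V])

lemma power2_h1norm: "v \<in> V \<Longrightarrow> (h1norm a v)\<^sup>2 = a v v"
  unfolding h1norm_def by (simp add: form_nonneg)

lemma norm_le_h1norm:
  obtains K where "K > 0" "\<And>v. v \<in> V \<Longrightarrow> norm v \<le> K * h1norm a v"
proof -
  obtain C where C: "C > 0" "\<And>v. v \<in> V \<Longrightarrow> (norm v)\<^sup>2 \<le> C * a v v"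
    using form_coercive by blast
  have "norm v \<le> sqrt C * h1norm a v" if "v \<in> V" for v
    using real_sqrt_le_mono[OF C(2)[OF that]] unfolding h1norm_def by (simp add: real_sqrt_mult)
  then show ?thesis using C(1) by (intro that[of "sqrt C"]) auto
qed

lemma bdd_above_hm1norm: "bdd_above (insert 0 ((\<lambda>v. \<bar>inner g v\<bar> / h1norm a v) ` (V - {0})))"
proof -
  obtain K where K: "K > 0" "\<And>v. v \<in> V \<Longrightarrow> norm v \<le> K * h1norm a v"
    using norm_le_h1norm by blast
  have "\<bar>inner g v\<bar> / h1norm a v \<le> norm g * K" if "v \<in> V" "v \<noteq> 0" for v
  proof -
    have "\<bar>inner g v\<bar> \<le> norm g * (K * h1norm a v)"
      using Cauchy_Schwarz_ineq2[of g v] K(2)[OF that(1)] by (meson mult_left_mono norm_ge_zero order_trans)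
    then show ?thesis using h1norm_pos[OF that] by (simp add: divide_le_eq mult.assoc)
  qed
  then show ?thesis
    unfolding bdd_above_def using K(1) by (intro exI[of _ "norm g * K"]) auto
qed

lemma hm1norm_nonneg: "0 \<le> hm1norm V a g"
  unfolding hm1norm_def by (rule cSup_upper[OF insertI1 bdd_above_hm1norm])

lemma abs_inner_le_hm1norm_h1norm:
  assumes "v \<in> V"
  shows "\<bar>inner g v\<bar> \<le> hm1norm V a g * h1norm a v"
proof (cases "v = 0")
  case False
  have "\<bar>inner g v\<bar> / h1norm a v \<le> hm1norm V a g"
    unfolding hm1norm_def using assms False by (intro cSup_upper[OF _ bdd_above_hm1norm]) auto
  then show ?thesis using h1norm_pos[OF assms False] by (simp add: divide_le_eq)
qed (simp add: h1norm_zero)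

lemma hm1norm_least:
  assumes "0 \<le> M" "\<And>v. v \<in> V \<Longrightarrow> v \<noteq> 0 \<Longrightarrow> \<bar>inner g v\<bar> \<le> M * h1norm a v"
  shows "hm1norm V a g \<le> M"
  unfolding hm1norm_def
proof (rule cSup_least)
  fix x assume "x \<in> insert 0 ((\<lambda>v. \<bar>inner g v\<bar> / h1norm a v) ` (V - {0}))"
  then obtain v where "x = 0 \<or> (v \<in> V \<and> v \<noteq> 0 \<and> x = \<bar>inner g v\<bar> / h1norm a v)"
    by auto
  then show "x \<le> M"
    using assms h1norm_pos[of v] by (auto simp: divide_le_eq)
qed simp

lemma hm1norm_mult_le:
  assumes "0 \<le> r" "0 \<le> M" "\<And>v. v \<in> V \<Longrightarrow> \<bar>inner g v\<bar> * r \<le> M * h1norm a v"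
  shows "hm1norm V a g * r \<le> M"
proof (cases "r = 0")
  case False
  then have "hm1norm V a g \<le> M / r"
    using assms by (intro hm1norm_least) (auto simp: le_divide_eq mult.commute mult.left_commute)
  then show ?thesis using assms(1) False by (simp add: le_divide_eq)
qed (use assms in simp)

lemma hm1norm_zero: "hm1norm V a 0 = 0"
  using hm1norm_least[of 0 0] hm1norm_nonneg[of 0] by simp

lemma hm1norm_triangle: "hm1norm V a (g + g') \<le> hm1norm V a g + hm1norm V a g'"
proof (rule hm1norm_least)
  show "0 \<le> hm1norm V a g + hm1norm V a g'"
    by (simp add: hm1norm_nonneg add_nonneg_nonneg)
  fix v assume "v \<in> V"
  then have "\<bar>inner g v\<bar> + \<bar>inner g' v\<bar> \<le> (hm1norm V a g + hm1norm V a g') * h1norm a v"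
    by (simp add: abs_inner_le_hm1norm_h1norm add_mono distrib_right)
  then show "\<bar>inner (g + g') v\<bar> \<le> (hm1norm V a g + hm1norm V a g') * h1norm a v"
    by (simp add: inner_add_left)
qed

lemma hm1norm_le_norm:
  obtains K where "K > 0" "\<And>g. hm1norm V a g \<le> K * norm g"
proof -
  obtain K where K: "K > 0" "\<And>v. v \<in> V \<Longrightarrow> norm v \<le> K * h1norm a v"
    using norm_le_h1norm by blast
  have "\<bar>inner g v\<bar> \<le> K * norm g * h1norm a v" if "v \<in> V" for g v
    using Cauchy_Schwarz_ineq2[of g v] mult_left_mono[OF K(2)[OF that] norm_ge_zero[of g]]
    by (simp add: mult_ac)
  then have "hm1norm V a g \<le> K * norm g" for g
    using K(1) by (intro hm1norm_least) auto
  then show ?thesis using K(1) by (intro that[of K]) auto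
qed

lemma lipschitz_hm1norm: obtains K where "K-lipschitz_on UNIV (hm1norm V a)"
proof -
  obtain K where K: "K > 0" "\<And>g. hm1norm V a g \<le> K * norm g"
    using hm1norm_le_norm by blast
  have "dist (hm1norm V a x) (hm1norm V a y) \<le> K * dist x y" for x y
    using hm1norm_triangle[of y "x - y"] hm1norm_triangle[of x "y - x"] K(2)[of "x - y"] K(2)[of "y - x"]
    by (simp add: dist_real_def dist_norm norm_minus_commute)
  then show ?thesis using K(1) by (intro that[of K] lipschitz_onI) auto
qed

lemma continuous_on_hm1norm: "continuous_on UNIV (hm1norm V a)"
  using lipschitz_hm1norm lipschitz_on_continuous_on by blast

lemma continuous_on_h1norm_poly:
  assumes "finite J" "\<And>j. j \<in> J \<Longrightarrow> d j \<in> V"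
  shows "continuous_on UNIV (\<lambda>s. h1norm a (\<Sum>j\<in>J. s ^ j *\<^sub>R d j))"
proof -
  have "a (\<Sum>j\<in>J. s ^ j *\<^sub>R d j) (\<Sum>j\<in>J. s ^ j *\<^sub>R d j) = (\<Sum>j\<in>J. \<Sum>l\<in>J. s ^ j * s ^ l * a (d j) (d l))"
    for s :: real
    by (rule form_sum_sum[OF assms])
  then show ?thesis
    unfolding h1norm_def by (simp only:) (intro continuous_intros)
qed

section \<open>Estimates on a single time interval\<close>

lemma square_integrable_norms:
  fixes f :: "'a \<Rightarrow> 'h"
  assumes mf: "set_borel_measurable M S f" and fV: "AE s in M. s \<in> S \<longrightarrow> f s \<in> V"
    and fa: "set_integrable M S (\<lambda>s. a (f s) (f s))"
  shows "set_borel_measurable M S (\<lambda>s. hm1norm V a (f s))"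
    and "set_borel_measurable M S (\<lambda>s. h1norm a (f s))"
    and "set_integrable M S (\<lambda>s. (h1norm a (f s))\<^sup>2)"
    and "set_integrable M S (\<lambda>s. (hm1norm V a (f s))\<^sup>2)"
proof -
  have "(\<lambda>s. indicator S s *\<^sub>R hm1norm V a (f s)) = (\<lambda>s. hm1norm V a (indicator S s *\<^sub>R f s))"
    by (auto split: split_indicator simp: hm1norm_zero)
  then show m_hm1: "set_borel_measurable M S (\<lambda>s. hm1norm V a (f s))"
    using borel_measurable_continuous_on[OF continuous_on_hm1norm] mf
    unfolding set_borel_measurable_def by simp
  have "(\<lambda>s. indicator S s *\<^sub>R h1norm a (f s)) = (\<lambda>s. sqrt (indicator S s *\<^sub>R a (f s) (f s)))"
    by (auto split: split_indicator simp: h1norm_def)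
  moreover have "(\<lambda>s. indicator S s *\<^sub>R a (f s) (f s)) \<in> borel_measurable M"
    using fa unfolding set_integrable_def by (rule borel_measurable_integrable)
  ultimately show m_h1: "set_borel_measurable M S (\<lambda>s. h1norm a (f s))"
    unfolding set_borel_measurable_def by simp
  have m_square: "set_borel_measurable M S (\<lambda>s. (g s)\<^sup>2)"
    if "set_borel_measurable M S g" for g :: "'a \<Rightarrow> real"
  proof -
    have "(\<lambda>s. indicator S s *\<^sub>R (g s)\<^sup>2) = (\<lambda>s. (indicator S s *\<^sub>R g s)\<^sup>2)"
      by (auto split: split_indicator)
    then show ?thesis using that unfolding set_borel_measurable_def by simp
  qed
  show i_h1: "set_integrable M S (\<lambda>s. (h1norm a (f s))\<^sup>2)"
    using fV by (intro set_integrable_bound[OF fa m_square[OF m_h1]]) (auto simp: power2_h1norm)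
  obtain K where K: "\<And>g. hm1norm V a g \<le> K * norm g"
    using hm1norm_le_norm by blast
  obtain C where C: "\<And>v. v \<in> V \<Longrightarrow> (norm v)\<^sup>2 \<le> C * a v v"
    using form_coercive by blast
  have "(hm1norm V a v)\<^sup>2 \<le> (K\<^sup>2 * C) * (h1norm a v)\<^sup>2" if "v \<in> V" for v
  proof -
    have "(hm1norm V a v)\<^sup>2 \<le> (K * norm v)\<^sup>2"
      using K[of v] hm1norm_nonneg by (simp add: power_mono)
    also have "\<dots> \<le> K\<^sup>2 * (C * a v v)"
      using C[OF that] by (simp add: power_mult_distrib mult_left_mono)
    finally show ?thesis using that by (simp add: power2_h1norm mult_ac)
  qed
  then show "set_integrable M S (\<lambda>s. (hm1norm V a (f s))\<^sup>2)"
    using fV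
    by (intro set_integrable_bound[OF set_integrable_mult_right[OF i_h1, of "K\<^sup>2 * C"] m_square[OF m_hm1]])
      (auto elim!: AE_mp intro: order_trans[OF _ abs_ge_self])
qed

lemma hm1norm_top_coeff_bound:
  fixes c :: "nat \<Rightarrow> 'h" and \<beta> :: "nat \<Rightarrow> real"
  assumes ab: "lo < hi"
    and orth: "\<And>l. l < Suc q \<Longrightarrow>
      integral {lo..hi} (\<lambda>s. (s ^ Suc q - (\<Sum>j<Suc q. \<beta> j * s ^ j)) * s ^ l) = 0"
  shows "hm1norm V a (c (Suc q)) * sqrt (integral {lo..hi} (\<lambda>s. (s ^ Suc q - (\<Sum>j<Suc q. \<beta> j * s ^ j))\<^sup>2))
    \<le> (hi - lo) * sqrt (integral {lo..hi} (\<lambda>s. (hm1norm V a (\<Sum>j\<le>Suc q. (real j * s ^ (j - 1)) *\<^sub>R c j))\<^sup>2))"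
proof -
  define P where "P = integral {lo..hi} (\<lambda>s. (s ^ Suc q - (\<Sum>j<Suc q. \<beta> j * s ^ j))\<^sup>2)"
  define X' where "X' s = (\<Sum>j\<le>Suc q. (real j * s ^ (j - 1)) *\<^sub>R c j)" for s :: real
  define D where "D = integral {lo..hi} (\<lambda>s. (hm1norm V a (X' s))\<^sup>2)"
  have cX': "continuous_on {lo..hi} X'" unfolding X'_def by (intro continuous_intros)
  have c_hX': "continuous_on {lo..hi} (\<lambda>s. (hm1norm V a (X' s))\<^sup>2)"
    using continuous_on_compose2[OF continuous_on_hm1norm cX'] by (intro continuous_intros) auto
  have P_nonneg: "0 \<le> P"
    unfolding P_def by (intro integral_nonneg integrable_continuous_interval continuous_intros) auto
  have D_nonneg: "0 \<le> D"
    unfolding D_def by (intro integral_nonneg integrable_continuous_interval c_hX') auto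
  have "hm1norm V a (c (Suc q)) * sqrt P \<le> (hi - lo) * sqrt D"
  proof (rule hm1norm_mult_le)
    show "0 \<le> sqrt P" "0 \<le> (hi - lo) * sqrt D" using P_nonneg ab D_nonneg by simp_all
    fix v assume v: "v \<in> V"
    have X'_v: "inner (X' s) v = (\<Sum>j\<le>Suc q. inner (c j) v * (real j * s ^ (j - 1)))" for s
      unfolding X'_def by (simp add: inner_sum_left mult_ac del: sum.atMost_Suc)
    have "(inner (c (Suc q)) v)\<^sup>2 * P \<le> (hi - lo)\<^sup>2 * integral {lo..hi} (\<lambda>s. (inner (X' s) v)\<^sup>2)"
      unfolding P_def X'_v by (rule poly_top_coeff_bound[OF ab orth])
    also have "\<dots> \<le> (hi - lo)\<^sup>2 * integral {lo..hi} (\<lambda>s. (h1norm a v)\<^sup>2 * (hm1norm V a (X' s))\<^sup>2)"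
    proof (intro mult_left_mono integral_le)
      fix s
      have "\<bar>inner (X' s) v\<bar>\<^sup>2 \<le> (hm1norm V a (X' s) * h1norm a v)\<^sup>2"
        using abs_inner_le_hm1norm_h1norm[OF v] by (rule power_mono) simp
      then show "(inner (X' s) v)\<^sup>2 \<le> (h1norm a v)\<^sup>2 * (hm1norm V a (X' s))\<^sup>2"
        by (simp add: power_mult_distrib mult.commute)
    qed (auto intro!: integrable_continuous_interval continuous_intros cX' c_hX')
    also have "\<dots> = ((hi - lo) * sqrt D * h1norm a v)\<^sup>2"
      using D_nonneg by (simp add: D_def power_mult_distrib)
    finally have "(\<bar>inner (c (Suc q)) v\<bar> * sqrt P)\<^sup>2 \<le> ((hi - lo) * sqrt D * h1norm a v)\<^sup>2"
      using P_nonneg by (simp add: power_mult_distrib)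
    then show "\<bar>inner (c (Suc q)) v\<bar> * sqrt P \<le> (hi - lo) * sqrt D * h1norm a v"
      by (rule power2_le_imp_le) (use ab D_nonneg h1norm_nonneg[OF v] in simp)
  qed
  then show ?thesis unfolding P_def D_def X'_def .
qed

lemma abs_set_integral_inner_le_hm1norm_h1norm:
  fixes f P :: "'a \<Rightarrow> 'h"
  assumes mf: "set_borel_measurable M A f" and fV: "AE s in M. s \<in> A \<longrightarrow> f s \<in> V"
    and fa: "set_integrable M A (\<lambda>s. a (f s) (f s))"
    and mP: "set_borel_measurable M A P" and PV: "\<And>s. s \<in> A \<Longrightarrow> P s \<in> V"
    and m_hP: "set_borel_measurable M A (\<lambda>s. h1norm a (P s))"
    and i_hP: "set_integrable M A (\<lambda>s. (h1norm a (P s))\<^sup>2)"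
  shows "set_integrable M A (\<lambda>s. inner (f s) (P s))"
    and "\<bar>LINT s:A|M. inner (f s) (P s)\<bar>
      \<le> sqrt (LINT s:A|M. (hm1norm V a (f s))\<^sup>2) * sqrt (LINT s:A|M. (h1norm a (P s))\<^sup>2)"
proof -
  note f_norms = square_integrable_norms[OF mf fV fa]
  have "(\<lambda>s. indicator A s *\<^sub>R inner (f s) (P s))
      = (\<lambda>s. inner (indicator A s *\<^sub>R f s) (indicator A s *\<^sub>R P s))"
    by (auto split: split_indicator)
  then have m: "set_borel_measurable M A (\<lambda>s. inner (f s) (P s))"
    using mf mP unfolding set_borel_measurable_def by (simp only:) (rule borel_measurable_inner)
  show "set_integrable M A (\<lambda>s. inner (f s) (P s))"
    and "\<bar>LINT s:A|M. inner (f s) (P s)\<bar>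
      \<le> sqrt (LINT s:A|M. (hm1norm V a (f s))\<^sup>2) * sqrt (LINT s:A|M. (h1norm a (P s))\<^sup>2)"
    using abs_inner_le_hm1norm_h1norm[OF PV]
    by (intro abs_set_integral_le_sqrt_mult[OF m f_norms(1) m_hP f_norms(4) i_hP]; simp)+
qed

lemma abs_set_integral_scaled_inner_le:
  fixes f :: "'a \<Rightarrow> 'h" and p :: "'a \<Rightarrow> real"
  assumes mf: "set_borel_measurable M A f" and fV: "AE s in M. s \<in> A \<longrightarrow> f s \<in> V"
    and fa: "set_integrable M A (\<lambda>s. a (f s) (f s))"
    and mp: "set_borel_measurable M A p" and ip: "set_integrable M A (\<lambda>s. (p s)\<^sup>2)"
  shows "set_integrable M A (\<lambda>s. inner (f s) (p s *\<^sub>R w))"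
    and "\<bar>LINT s:A|M. inner (f s) (p s *\<^sub>R w)\<bar>
      \<le> hm1norm V a w * (sqrt (LINT s:A|M. (p s)\<^sup>2) * sqrt (LINT s:A|M. (h1norm a (f s))\<^sup>2))"
proof -
  note f_norms = square_integrable_norms[OF mf fV fa]
  have "(\<lambda>s. indicator A s *\<^sub>R inner (f s) (p s *\<^sub>R w))
      = (\<lambda>s. (indicator A s *\<^sub>R p s) * inner (indicator A s *\<^sub>R f s) w)"
    and "(\<lambda>s. indicator A s *\<^sub>R \<bar>p s\<bar>) = (\<lambda>s. \<bar>indicator A s *\<^sub>R p s\<bar>)"
    and "(\<lambda>s. indicator A s *\<^sub>R (hm1norm V a w * h1norm a (f s)))
      = (\<lambda>s. hm1norm V a w * (indicator A s *\<^sub>R h1norm a (f s)))"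
    by (auto split: split_indicator)
  then have m: "set_borel_measurable M A (\<lambda>s. inner (f s) (p s *\<^sub>R w))"
    "set_borel_measurable M A (\<lambda>s. \<bar>p s\<bar>)"
    "set_borel_measurable M A (\<lambda>s. hm1norm V a w * h1norm a (f s))"
    using mf mp f_norms(2) unfolding set_borel_measurable_def
    by (simp_all only:) (intro borel_measurable_times borel_measurable_inner, auto)
  have "\<bar>inner (f s) (p s *\<^sub>R w)\<bar> \<le> \<bar>p s\<bar> * (hm1norm V a w * h1norm a (f s))" if "f s \<in> V" for s
    using abs_inner_le_hm1norm_h1norm[OF that, of w]
    by (simp add: abs_mult inner_commute mult_left_mono)
  then have "AE s in M. s \<in> A \<longrightarrow>
      \<bar>inner (f s) (p s *\<^sub>R w)\<bar> \<le> \<bar>p s\<bar> * (hm1norm V a w * h1norm a (f s))"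
    using fV by (auto elim!: AE_mp)
  moreover have "set_integrable M A (\<lambda>s. \<bar>p s\<bar>\<^sup>2)"
    "set_integrable M A (\<lambda>s. (hm1norm V a w * h1norm a (f s))\<^sup>2)"
    using ip f_norms(3) by (simp_all add: power_mult_distrib)
  moreover have "sqrt (LINT s:A|M. (hm1norm V a w * h1norm a (f s))\<^sup>2)
      = hm1norm V a w * sqrt (LINT s:A|M. (h1norm a (f s))\<^sup>2)"
    by (simp add: power_mult_distrib real_sqrt_mult hm1norm_nonneg)
  ultimately show "set_integrable M A (\<lambda>s. inner (f s) (p s *\<^sub>R w))"
    and "\<bar>LINT s:A|M. inner (f s) (p s *\<^sub>R w)\<bar>
      \<le> hm1norm V a w * (sqrt (LINT s:A|M. (p s)\<^sup>2) * sqrt (LINT s:A|M. (h1norm a (f s))\<^sup>2))"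
    using abs_set_integral_le_sqrt_mult[OF m] by (auto simp: mult_ac)
qed

lemma abs_set_integral_inner_split:
  fixes f P :: "'a \<Rightarrow> 'h" and p :: "'a \<Rightarrow> real"
  assumes f: "set_borel_measurable M A f" "AE s in M. s \<in> A \<longrightarrow> f s \<in> V"
      "set_integrable M A (\<lambda>s. a (f s) (f s))"
    and P: "set_borel_measurable M A P" "\<And>s. s \<in> A \<Longrightarrow> P s \<in> V"
      "set_borel_measurable M A (\<lambda>s. h1norm a (P s))" "set_integrable M A (\<lambda>s. (h1norm a (P s))\<^sup>2)"
    and p: "set_borel_measurable M A p" "set_integrable M A (\<lambda>s. (p s)\<^sup>2)"
    and X: "\<And>s. s \<in> A \<Longrightarrow> X s = P s + p s *\<^sub>R w"
  shows "set_integrable M A (\<lambda>s. inner (f s) (X s))"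
    and "\<bar>LINT s:A|M. inner (f s) (X s)\<bar>
      \<le> sqrt (LINT s:A|M. (hm1norm V a (f s))\<^sup>2) * sqrt (LINT s:A|M. (h1norm a (P s))\<^sup>2)
        + hm1norm V a w * (sqrt (LINT s:A|M. (p s)\<^sup>2) * sqrt (LINT s:A|M. (h1norm a (f s))\<^sup>2))"
proof -
  note T1 = abs_set_integral_inner_le_hm1norm_h1norm[OF f P]
    and T2 = abs_set_integral_scaled_inner_le[OF f p, of w]
  have ind_eq: "(\<lambda>s. indicator A s *\<^sub>R inner (f s) (X s))
      = (\<lambda>s. indicator A s *\<^sub>R (inner (f s) (P s) + inner (f s) (p s *\<^sub>R w)))"
    using X by (auto split: split_indicator simp: inner_add_right)
  show "set_integrable M A (\<lambda>s. inner (f s) (X s))"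
    using set_integral_add(1)[OF T1(1) T2(1)] unfolding set_integrable_def ind_eq .
  have "(LINT s:A|M. inner (f s) (X s))
      = (LINT s:A|M. inner (f s) (P s)) + (LINT s:A|M. inner (f s) (p s *\<^sub>R w))"
    using set_integral_add(2)[OF T1(1) T2(1)] unfolding set_lebesgue_integral_def ind_eq .
  then show "\<bar>LINT s:A|M. inner (f s) (X s)\<bar>
      \<le> sqrt (LINT s:A|M. (hm1norm V a (f s))\<^sup>2) * sqrt (LINT s:A|M. (h1norm a (P s))\<^sup>2)
        + hm1norm V a w * (sqrt (LINT s:A|M. (p s)\<^sup>2) * sqrt (LINT s:A|M. (h1norm a (f s))\<^sup>2))"
    using T1(2) T2(2) by simp
qed

lemma abs_set_integral_inner_split_interval:
  fixes f P :: "real \<Rightarrow> 'h" and p :: "real \<Rightarrow> real"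
  assumes f: "set_borel_measurable lborel {lo..hi} f" "AE s in lborel. s \<in> {lo..hi} \<longrightarrow> f s \<in> V"
      "set_integrable lborel {lo..hi} (\<lambda>s. a (f s) (f s))"
    and cP: "continuous_on {lo..hi} P" and PV: "\<And>s. P s \<in> V"
    and c_hP: "continuous_on {lo..hi} (\<lambda>s. h1norm a (P s))"
    and cp: "continuous_on {lo..hi} p"
    and X: "\<And>s. s \<in> {lo..hi} \<Longrightarrow> X s = P s + p s *\<^sub>R w"
  shows "set_integrable lborel {lo..hi} (\<lambda>s. inner (f s) (X s))"
    and "\<bar>LINT s:{lo..hi}|lborel. inner (f s) (X s)\<bar>
      \<le> sqrt (LINT s:{lo..hi}|lborel. (hm1norm V a (f s))\<^sup>2) * sqrt (LINT s:{lo..hi}|lborel. (h1norm a (P s))\<^sup>2)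
        + hm1norm V a w * (sqrt (LINT s:{lo..hi}|lborel. (p s)\<^sup>2)
          * sqrt (LINT s:{lo..hi}|lborel. (h1norm a (f s))\<^sup>2))"
proof -
  have "continuous_on {lo..hi} (\<lambda>s. (h1norm a (P s))\<^sup>2)" "continuous_on {lo..hi} (\<lambda>s. (p s)\<^sup>2)"
    by (intro continuous_intros c_hP cp)+
  then show "set_integrable lborel {lo..hi} (\<lambda>s. inner (f s) (X s))"
    and "\<bar>LINT s:{lo..hi}|lborel. inner (f s) (X s)\<bar>
      \<le> sqrt (LINT s:{lo..hi}|lborel. (hm1norm V a (f s))\<^sup>2) * sqrt (LINT s:{lo..hi}|lborel. (h1norm a (P s))\<^sup>2)
        + hm1norm V a w * (sqrt (LINT s:{lo..hi}|lborel. (p s)\<^sup>2)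
          * sqrt (LINT s:{lo..hi}|lborel. (h1norm a (f s))\<^sup>2))"
    using abs_set_integral_inner_split[OF f set_integrable_continuous_on_interval(2)[OF cP] PV
        set_integrable_continuous_on_interval(2)[OF c_hP] set_integrable_continuous_on_interval(1)
        set_integrable_continuous_on_interval(2)[OF cp] set_integrable_continuous_on_interval(1) X]
    by blast+
qed

lemma hm1norm_vector_derivative_poly:
  fixes X :: "real \<Rightarrow> 'h" and c :: "nat \<Rightarrow> 'h"
  assumes X: "\<And>s. s \<in> {lo..hi} \<Longrightarrow> X s = (\<Sum>j\<le>n. s ^ j *\<^sub>R c j)"
  shows "set_integrable lborel {lo..hi} (\<lambda>s. (hm1norm V a (vector_derivative X (at s)))\<^sup>2)"
    and "(LINT s:{lo..hi}|lborel. (hm1norm V a (vector_derivative X (at s)))\<^sup>2)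
      = integral {lo..hi} (\<lambda>s. (hm1norm V a (\<Sum>j\<le>n. (real j * s ^ (j - 1)) *\<^sub>R c j))\<^sup>2)"
proof -
  define X' where "X' s = (\<Sum>j\<le>n. (real j * s ^ (j - 1)) *\<^sub>R c j)" for s :: real
  have c_hX': "continuous_on {lo..hi} (\<lambda>s. (hm1norm V a (X' s))\<^sup>2)"
    unfolding X'_def by (intro continuous_intros continuous_on_compose2[OF continuous_on_hm1norm]) auto
  have "(hm1norm V a (vector_derivative X (at s)))\<^sup>2 = (hm1norm V a (X' s))\<^sup>2" if "s \<in> {lo<..<hi}" for s
    unfolding X'_def using vector_derivative_poly_on_interval[OF X that] by simp
  note cong = set_integral_cong_interior[where g="\<lambda>s. (hm1norm V a (vector_derivative X (at s)))\<^sup>2"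
      and h="\<lambda>s. (hm1norm V a (X' s))\<^sup>2", OF this]
  show "set_integrable lborel {lo..hi} (\<lambda>s. (hm1norm V a (vector_derivative X (at s)))\<^sup>2)"
    using cong(1) set_integrable_continuous_on_interval(1)[OF c_hX'] by blast
  show "(LINT s:{lo..hi}|lborel. (hm1norm V a (vector_derivative X (at s)))\<^sup>2)
      = integral {lo..hi} (\<lambda>s. (hm1norm V a (\<Sum>j\<le>n. (real j * s ^ (j - 1)) *\<^sub>R c j))\<^sup>2)"
    using cong(2) set_borel_integral_eq_integral_continuous[OF c_hX'] unfolding X'_def by simp
qed

lemma poly_piece_estimate:
  fixes f X :: "real \<Rightarrow> 'h" and c :: "nat \<Rightarrow> 'h"
  assumes ab: "lo < hi"
    and f: "set_borel_measurable lborel {lo..hi} f" "AE s in lborel. s \<in> {lo..hi} \<longrightarrow> f s \<in> V"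
      "set_integrable lborel {lo..hi} (\<lambda>s. a (f s) (f s))"
    and cV: "\<And>j. c j \<in> V"
    and X: "\<And>s. s \<in> {lo..hi} \<Longrightarrow> X s = (\<Sum>j\<le>Suc q. s ^ j *\<^sub>R c j)"
  shows "set_integrable lborel {lo..hi} (\<lambda>s. inner (f s) (X s))"
    and "set_integrable lborel {lo..hi} (\<lambda>s. (hm1norm V a (vector_derivative X (at s)))\<^sup>2)"
    and "set_integrable lborel {lo..hi} (\<lambda>s. (h1norm a (poly_proj q lo hi X s))\<^sup>2)"
    and "\<bar>LINT s:{lo..hi}|lborel. inner (f s) (X s)\<bar>
      \<le> sqrt (LINT s:{lo..hi}|lborel. (hm1norm V a (f s))\<^sup>2)
          * sqrt (LINT s:{lo..hi}|lborel. (h1norm a (poly_proj q lo hi X s))\<^sup>2)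
        + (hi - lo) * (sqrt (LINT s:{lo..hi}|lborel. (h1norm a (f s))\<^sup>2)
          * sqrt (LINT s:{lo..hi}|lborel. (hm1norm V a (vector_derivative X (at s)))\<^sup>2))"
proof -
  have "continuous_on {lo..hi} (\<lambda>s::real. s ^ Suc q)" by (intro continuous_intros)
  then obtain \<beta> where orth: "\<And>l. l < Suc q \<Longrightarrow>
      integral {lo..hi} (\<lambda>s. (s ^ Suc q - (\<Sum>j<Suc q. \<beta> j * s ^ j)) * s ^ l) = 0"
    using orthogonal_remainder_exists[OF ab] by blast
  define p where "p s = s ^ Suc q - (\<Sum>j<Suc q. \<beta> j * s ^ j)" for s :: real
  define d where "d j = c j + \<beta> j *\<^sub>R c (Suc q)" for j
  have proj: "poly_proj q lo hi X = (\<lambda>s. \<Sum>j\<le>q. s ^ j *\<^sub>R d j)"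
    unfolding d_def using poly_proj_top_degree[OF ab X orth] .
  have dV: "d j \<in> V" for j
    unfolding d_def using cV subspace_V by (intro subspace_add subspace_scale) auto
  have c_hP: "continuous_on {lo..hi} (\<lambda>s. h1norm a (\<Sum>j\<le>q. s ^ j *\<^sub>R d j))"
    using continuous_on_h1norm_poly[of "{..q}" d] dV continuous_on_subset by blast
  have PV: "(\<Sum>j\<le>q. s ^ j *\<^sub>R d j) \<in> V" for s
    using dV subspace_V by (intro subspace_sum subspace_scale) auto
  have XP: "X s = (\<Sum>j\<le>q. s ^ j *\<^sub>R d j) + p s *\<^sub>R c (Suc q)" if "s \<in> {lo..hi}" for s
    unfolding X[OF that] d_def p_def by (rule poly_split_top_coeff)
  have cP: "continuous_on {lo..hi} (\<lambda>s. \<Sum>j\<le>q. s ^ j *\<^sub>R d j)" "continuous_on {lo..hi} p"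
    unfolding p_def by (intro continuous_intros)+
  note split = abs_set_integral_inner_split_interval[OF f cP(1) PV c_hP cP(2) XP]
  have top: "hm1norm V a (c (Suc q)) * sqrt (LINT s:{lo..hi}|lborel. (p s)\<^sup>2)
      \<le> (hi - lo) * sqrt (LINT s:{lo..hi}|lborel. (hm1norm V a (vector_derivative X (at s)))\<^sup>2)"
    using hm1norm_top_coeff_bound[OF ab orth] hm1norm_vector_derivative_poly(2)[OF X]
    by (simp add: p_def set_borel_integral_eq_integral_continuous continuous_intros)
  have "hm1norm V a (c (Suc q)) * (sqrt (LINT s:{lo..hi}|lborel. (p s)\<^sup>2)
      * sqrt (LINT s:{lo..hi}|lborel. (h1norm a (f s))\<^sup>2))
    \<le> (hi - lo) * (sqrt (LINT s:{lo..hi}|lborel. (h1norm a (f s))\<^sup>2)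
      * sqrt (LINT s:{lo..hi}|lborel. (hm1norm V a (vector_derivative X (at s)))\<^sup>2))"
  proof -
    have "0 \<le> sqrt (LINT s:{lo..hi}|lborel. (h1norm a (f s))\<^sup>2)"
      by (simp add: set_lebesgue_integral_def)
    from mult_right_mono[OF top this] show ?thesis by (simp only: mult_ac)
  qed
  then show "\<bar>LINT s:{lo..hi}|lborel. inner (f s) (X s)\<bar>
      \<le> sqrt (LINT s:{lo..hi}|lborel. (hm1norm V a (f s))\<^sup>2)
          * sqrt (LINT s:{lo..hi}|lborel. (h1norm a (poly_proj q lo hi X s))\<^sup>2)
        + (hi - lo) * (sqrt (LINT s:{lo..hi}|lborel. (h1norm a (f s))\<^sup>2)
          * sqrt (LINT s:{lo..hi}|lborel. (hm1norm V a (vector_derivative X (at s)))\<^sup>2))"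
    using split(2) unfolding proj by linarith
  show "set_integrable lborel {lo..hi} (\<lambda>s. inner (f s) (X s))"
    by (rule split(1))
  show "set_integrable lborel {lo..hi} (\<lambda>s. (hm1norm V a (vector_derivative X (at s)))\<^sup>2)"
    by (rule hm1norm_vector_derivative_poly(1)[OF X])
  show "set_integrable lborel {lo..hi} (\<lambda>s. (h1norm a (poly_proj q lo hi X s))\<^sup>2)"
    unfolding proj using c_hP by (intro set_integrable_continuous_on_interval(1) continuous_intros)
qed

end

section \<open>Summing over the partition\<close>

lemma mult_add_mult_le_sqrt:
  fixes a b c d :: real
  shows "a * c + b * d \<le> sqrt (a\<^sup>2 + b\<^sup>2) * sqrt (c\<^sup>2 + d\<^sup>2)"
  by (rule power2_le_imp_le)
    (simp_all add: power2_sum power_mult_distrib ring_distribs L2_set_mult_ineq_lemma add.commute)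

lemma sum_mult_le_sqrt:
  fixes x y :: "'a \<Rightarrow> real"
  shows "(\<Sum>i\<in>I. x i * y i) \<le> sqrt (\<Sum>i\<in>I. (x i)\<^sup>2) * sqrt (\<Sum>i\<in>I. (y i)\<^sup>2)"
  using Cauchy_Schwarz_ineq_sum[of x y I] by (simp add: real_le_rsqrt flip: real_sqrt_mult)

lemma sum_pairs_plus_mult_le_sqrt:
  fixes x x' y y' :: "'a \<Rightarrow> real"
  shows "(\<Sum>i\<in>I. x i * y i + x' i * y' i) + e * f
    \<le> sqrt ((\<Sum>i\<in>I. (x i)\<^sup>2 + (x' i)\<^sup>2) + e\<^sup>2) * sqrt ((\<Sum>i\<in>I. (y i)\<^sup>2 + (y' i)\<^sup>2) + f\<^sup>2)"
proof -
  let ?X = "\<lambda>i. sqrt ((x i)\<^sup>2 + (x' i)\<^sup>2)" and ?Y = "\<lambda>i. sqrt ((y i)\<^sup>2 + (y' i)\<^sup>2)"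
  have "(\<Sum>i\<in>I. x i * y i + x' i * y' i) \<le> (\<Sum>i\<in>I. ?X i * ?Y i)"
    by (intro sum_mono mult_add_mult_le_sqrt)
  also have "\<dots> \<le> sqrt (\<Sum>i\<in>I. (?X i)\<^sup>2) * sqrt (\<Sum>i\<in>I. (?Y i)\<^sup>2)"
    by (rule sum_mult_le_sqrt)
  finally have "(\<Sum>i\<in>I. x i * y i + x' i * y' i) + e * f
    \<le> sqrt (\<Sum>i\<in>I. (?X i)\<^sup>2) * sqrt (\<Sum>i\<in>I. (?Y i)\<^sup>2) + e * f" by simp
  also have "\<dots> \<le> sqrt ((sqrt (\<Sum>i\<in>I. (?X i)\<^sup>2))\<^sup>2 + e\<^sup>2) * sqrt ((sqrt (\<Sum>i\<in>I. (?Y i)\<^sup>2))\<^sup>2 + f\<^sup>2)"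
    by (rule mult_add_mult_le_sqrt)
  finally show ?thesis by (simp add: sum_nonneg)
qed

lemma abs_sum_add_le_sqrt:
  fixes I F G P D k :: "'a \<Rightarrow> real"
  assumes bound: "\<And>i. i \<in> S \<Longrightarrow> \<bar>I i\<bar> \<le> sqrt (F i) * sqrt (P i) + k i * (sqrt (G i) * sqrt (D i))"
    and nonneg: "\<And>i. i \<in> S \<Longrightarrow> 0 \<le> F i \<and> 0 \<le> G i \<and> 0 \<le> P i \<and> 0 \<le> D i"
    and e: "\<bar>e\<bar> \<le> u * x"
  shows "\<bar>(\<Sum>i\<in>S. I i) + e\<bar> \<le> sqrt ((\<Sum>i\<in>S. F i + (k i)\<^sup>2 * G i) + u\<^sup>2) * sqrt ((\<Sum>i\<in>S. P i + D i) + x\<^sup>2)"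
proof -
  have "\<bar>(\<Sum>i\<in>S. I i) + e\<bar> \<le> (\<Sum>i\<in>S. \<bar>I i\<bar>) + \<bar>e\<bar>"
    by (rule order_trans[OF abs_triangle_ineq add_right_mono[OF sum_abs]])
  also have "\<dots> \<le> (\<Sum>i\<in>S. sqrt (F i) * sqrt (P i) + (k i * sqrt (G i)) * sqrt (D i)) + u * x"
    using bound e by (intro add_mono sum_mono) (auto simp: mult.assoc)
  also have "\<dots> \<le> sqrt ((\<Sum>i\<in>S. (sqrt (F i))\<^sup>2 + (k i * sqrt (G i))\<^sup>2) + u\<^sup>2)
      * sqrt ((\<Sum>i\<in>S. (sqrt (P i))\<^sup>2 + (sqrt (D i))\<^sup>2) + x\<^sup>2)"
    by (rule sum_pairs_plus_mult_le_sqrt)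
  also have "\<dots> = sqrt ((\<Sum>i\<in>S. F i + (k i)\<^sup>2 * G i) + u\<^sup>2) * sqrt ((\<Sum>i\<in>S. P i + D i) + x\<^sup>2)"
    using nonneg by (simp add: power_mult_distrib cong: sum.cong)
  finally show ?thesis .
qed

lemma partition_mono:
  assumes "partition t N T" "i \<le> j" "j \<le> N"
  shows "t i \<le> t j"
  using assms(2,3)
proof (induction j rule: dec_induct)
  case (step j)
  then show ?case
    using assms(1) unfolding partition_def by (meson Suc_le_lessD less_imp_le order_trans Suc_leD)
qed simp

lemma partition_interval_subset:
  assumes "partition t N T" "i < N"
  shows "{t i..t (Suc i)} \<subseteq> {0..T}"
  using partition_mono[OF assms(1), of 0 i] partition_mono[OF assms(1), of "Suc i" N] assms
  unfolding partition_def by auto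

lemma (in gelfand_triple) partition_piece_estimate:
  assumes partition: "partition t N T"
    and mf: "set_borel_measurable lborel {0..T} f" and fV: "AE s in lborel. s \<in> {0..T} \<longrightarrow> f s \<in> V"
    and fa: "set_integrable lborel {0..T} (\<lambda>s. a (f s) (f s))"
    and X: "in_Xk V t N q X" and i: "i < N"
  shows "set_integrable lborel {t i..t (Suc i)} (\<lambda>s. inner (f s) (X s))"
    and "set_integrable lborel {t i..t (Suc i)} (\<lambda>s. (hm1norm V a (vector_derivative X (at s)))\<^sup>2)"
    and "set_integrable lborel {t i..t (Suc i)} (\<lambda>s. (h1norm a (poly_proj q (t i) (t (Suc i)) X s))\<^sup>2)"
    and "\<bar>LINT s:{t i..t (Suc i)}|lborel. inner (f s) (X s)\<bar>
      \<le> sqrt (LINT s:{t i..t (Suc i)}|lborel. (hm1norm V a (f s))\<^sup>2)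
          * sqrt (LINT s:{t i..t (Suc i)}|lborel. (h1norm a (poly_proj q (t i) (t (Suc i)) X s))\<^sup>2)
        + (t (Suc i) - t i) * (sqrt (LINT s:{t i..t (Suc i)}|lborel. (h1norm a (f s))\<^sup>2)
          * sqrt (LINT s:{t i..t (Suc i)}|lborel. (hm1norm V a (vector_derivative X (at s)))\<^sup>2))"
proof -
  obtain c where "\<And>j. c j \<in> V"
    and "\<And>s. s \<in> {t i..t (Suc i)} \<Longrightarrow> X s = (\<Sum>j\<le>Suc q. s ^ j *\<^sub>R c j)"
    using X i unfolding in_Xk_def Suc_eq_plus1[symmetric] by blast
  moreover have sub: "{t i..t (Suc i)} \<subseteq> {0..T}"
    by (rule partition_interval_subset[OF partition i])
  moreover have "AE s in lborel. s \<in> {t i..t (Suc i)} \<longrightarrow> f s \<in> V"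
    using fV by eventually_elim (use sub in auto)
  moreover have "t i < t (Suc i)"
    using partition i unfolding partition_def by simp
  ultimately show "set_integrable lborel {t i..t (Suc i)} (\<lambda>s. inner (f s) (X s))"
    and "set_integrable lborel {t i..t (Suc i)} (\<lambda>s. (hm1norm V a (vector_derivative X (at s)))\<^sup>2)"
    and "set_integrable lborel {t i..t (Suc i)} (\<lambda>s. (h1norm a (poly_proj q (t i) (t (Suc i)) X s))\<^sup>2)"
    and "\<bar>LINT s:{t i..t (Suc i)}|lborel. inner (f s) (X s)\<bar>
      \<le> sqrt (LINT s:{t i..t (Suc i)}|lborel. (hm1norm V a (f s))\<^sup>2)
          * sqrt (LINT s:{t i..t (Suc i)}|lborel. (h1norm a (poly_proj q (t i) (t (Suc i)) X s))\<^sup>2)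
        + (t (Suc i) - t i) * (sqrt (LINT s:{t i..t (Suc i)}|lborel. (h1norm a (f s))\<^sup>2)
          * sqrt (LINT s:{t i..t (Suc i)}|lborel. (hm1norm V a (vector_derivative X (at s)))\<^sup>2))"
    using poly_piece_estimate[of "t i" "t (Suc i)" f c X q]
      set_borel_measurable_subset[OF mf _ sub] set_integrable_subset[OF fa _ sub] by simp_all
qed

theorem lemma5p3:
  fixes V :: "'h::{real_inner,banach,second_countable_topology} set"
    and a :: "'h \<Rightarrow> 'h \<Rightarrow> real"
    and t :: "nat \<Rightarrow> real" and N :: nat and T :: real and q :: nat
    and f :: "real \<Rightarrow> 'h" and u0 :: 'h and X :: "real \<Rightarrow> 'h"
  assumes "gelfand_setup V a"
    and "partition t N T"
    and "set_borel_measurable lborel {0..T} f"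
    and "AE s in lborel. s \<in> {0..T} \<longrightarrow> f s \<in> V"
    and "set_integrable lborel {0..T} (\<lambda>s. a (f s) (f s))"
    and "in_Xk V t N q X"
  shows "\<bar>(LINT s:{0..T}|lborel. inner (f s) (X s)) + inner u0 (X 0)\<bar>
     \<le> sqrt ((\<Sum>i<N. (LINT s:{t i..t (Suc i)}|lborel. (hm1norm V a (f s))\<^sup>2)
               + (t (Suc i) - t i)\<^sup>2 * (LINT s:{t i..t (Suc i)}|lborel. (h1norm a (f s))\<^sup>2))
             + (norm u0)\<^sup>2)
       * sqrt (Xk_norm2 V a t N q X)"
proof -
  interpret gelfand_triple V a by (rule gelfand_triple.intro) (rule assms(1))
  note piece = partition_piece_estimate[OF assms(2-6)]
  have "(LINT s:{0..T}|lborel. inner (f s) (X s))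
      = (\<Sum>i<N. LINT s:{t i..t (Suc i)}|lborel. inner (f s) (X s))"
    using set_integral_sum_partition[of N t "\<lambda>s. inner (f s) (X s)"] assms(2) piece(1)
    unfolding partition_def by (simp add: less_imp_le)
  moreover have "Xk_norm2 V a t N q X
      = (\<Sum>i<N. (LINT s:{t i..t (Suc i)}|lborel. (h1norm a (poly_proj q (t i) (t (Suc i)) X s))\<^sup>2)
          + (LINT s:{t i..t (Suc i)}|lborel. (hm1norm V a (vector_derivative X (at s)))\<^sup>2))
        + (norm (X 0))\<^sup>2"
    unfolding Xk_norm2_def using piece(2,3) by (simp add: add.commute)
  ultimately show ?thesis
    using piece(4) Cauchy_Schwarz_ineq2[of u0 "X 0"]
    by (simp only:) (rule abs_sum_add_le_sqrt; simp add: set_lebesgue_integral_def)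
qed

end
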